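(* Let $F$ be an undirected forest on $n \geq 2$ vertices and let $k \geq 2$ be a natural number. Then $\psi_b(F,k) \geq \frac{n+3k-1}{2k}$. Moreover, this lower bound is tight (it is attained whenever the expression $\frac{n+3k-1}{2k}$ is an integer).
   Context: In an undirected forest, a leaf is a vertex of degree $1$, an isolated vertex is a vertex of degree $0$, and a branching vertex is a vertex of degree at least $3$. A set $P$ of vertices of $F$ is a branching $k$-path vertex cover of $F$ if every vertex of degree at most $1$ belongs to $P$ and every path on $k$ vertices (of length $k-1$) in $F$ contains a branching vertex or a vertex of $P$. The branching $k$-path vertex cover number $\psi_b(F,k)$ is the minimum size of a branching $k$-path vertex cover of $F$. *)

theory Defs
  imports Complex_Main
begin

definition simple_graph :: "'a set \<Rightarrow> ('a \<Rightarrow> 'a \<Rightarrow> bool) \<Rightarrow> bool" where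
  "simple_graph V E \<longleftrightarrow> finite V \<and> (\<forall>u v. E u v \<longrightarrow> E v u)
     \<and> (\<forall>v. \<not> E v v) \<and> (\<forall>u v. E u v \<longrightarrow> u \<in> V \<and> v \<in> V)"

definition is_path :: "'a set \<Rightarrow> ('a \<Rightarrow> 'a \<Rightarrow> bool) \<Rightarrow> 'a list \<Rightarrow> bool" where
  "is_path V E p \<longleftrightarrow> p \<noteq> [] \<and> set p \<subseteq> V \<and> distinct p
     \<and> (\<forall>i. Suc i < length p \<longrightarrow> E (p ! i) (p ! Suc i))"

definition is_cycle :: "'a set \<Rightarrow> ('a \<Rightarrow> 'a \<Rightarrow> bool) \<Rightarrow> 'a list \<Rightarrow> bool" where
  "is_cycle V E c \<longleftrightarrow> is_path V E c \<and> length c \<ge> 3 \<and> E (last c) (hd c)"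

definition forest :: "'a set \<Rightarrow> ('a \<Rightarrow> 'a \<Rightarrow> bool) \<Rightarrow> bool" where
  "forest V E \<longleftrightarrow> simple_graph V E \<and> (\<nexists>c. is_cycle V E c)"

definition degree :: "'a set \<Rightarrow> ('a \<Rightarrow> 'a \<Rightarrow> bool) \<Rightarrow> 'a \<Rightarrow> nat" where
  "degree V E v = card {u \<in> V. E v u}"

definition branching_kpvc :: "'a set \<Rightarrow> ('a \<Rightarrow> 'a \<Rightarrow> bool) \<Rightarrow> nat \<Rightarrow> 'a set \<Rightarrow> bool" where
  "branching_kpvc V E k P \<longleftrightarrow> P \<subseteq> V
     \<and> (\<forall>v\<in>V. degree V E v \<le> 1 \<longrightarrow> v \<in> P)
     \<and> (\<forall>p. is_path V E p \<and> length p = k \<longrightarrow>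
            (\<exists>v\<in>set p. degree V E v \<ge> 3 \<or> v \<in> P))"

definition psi_b :: "'a set \<Rightarrow> ('a \<Rightarrow> 'a \<Rightarrow> bool) \<Rightarrow> nat \<Rightarrow> nat" where
  "psi_b V E k = Min (card ` {P. branching_kpvc V E k P})"

end

theory Submission
  imports Defs
begin

text \<open>
  Fix a branching k-path vertex cover P, let B be the branching vertices outside P
  and U the remaining vertices, all of degree 2. Since every path on k vertices meets P or B, the
  forest induced by U is a union of paths with at most k - 1 vertices each, and each such path
  sends exactly two edges out of U; hence 2|U| <= (k - 1) times the degree sum over P and B. The
  non-isolated part of F is a forest, so its degree sum is at most twice its order minus 2.
  Together with degree >= 1 on the non-isolated vertices of P and degree >= 3 on B, this yields
  n + 3k - 1 <= 2k|P|.

  Tightness. A comb with a spine of (M+1)k + 1 vertices and M teeth of k vertices each, hung at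
  the spine vertices k, 2k, ..., Mk, has (2M+1)k + 1 vertices, and its M + 2 leaves form a cover.
\<close>

lemma simple_graphD:
  assumes "simple_graph V E"
  shows "finite V" and "E u v \<Longrightarrow> E v u" and "\<not> E v v"
    and "E u v \<Longrightarrow> u \<in> V" and "E u v \<Longrightarrow> v \<in> V"
  using assms by (auto simp: simple_graph_def)

lemma card_le_degree: "finite V \<Longrightarrow> S \<subseteq> {u \<in> V. E v u} \<Longrightarrow> card S \<le> degree V E v"
  unfolding degree_def by (rule card_mono) auto

lemma degree_pos:
  assumes "simple_graph V E" "E v u"
  shows "0 < degree V E v"
proof -
  have "u \<in> {w \<in> V. E v w}" using simple_graphD(5)[OF assms] assms(2) by simp
  then show ?thesis
    unfolding degree_def using simple_graphD(1)[OF assms(1)] by (auto simp: card_gt_0_iff)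
qed

lemma degree_split:
  assumes "finite V" "S \<subseteq> V"
  shows "degree V E v = card {u \<in> S. E v u} + card {u \<in> V - S. E v u}"
proof -
  have "{u \<in> V. E v u} = {u \<in> S. E v u} \<union> {u \<in> V - S. E v u}" using assms(2) by auto
  moreover have "card ({u \<in> S. E v u} \<union> {u \<in> V - S. E v u})
      = card {u \<in> S. E v u} + card {u \<in> V - S. E v u}"
    using assms by (intro card_Un_disjoint) (auto intro: finite_subset)
  ultimately show ?thesis by (simp add: degree_def)
qed

definition induced :: "('a \<Rightarrow> 'a \<Rightarrow> bool) \<Rightarrow> 'a set \<Rightarrow> 'a \<Rightarrow> 'a \<Rightarrow> bool" where
  "induced E S u v \<longleftrightarrow> E u v \<and> u \<in> S \<and> v \<in> S"

lemma is_path_induced: "S \<subseteq> V \<Longrightarrow> is_path S (induced E S) p \<Longrightarrow> is_path V E p"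
  by (auto simp: is_path_def induced_def)

lemma forest_induced:
  assumes "forest V E" "S \<subseteq> V"
  shows "forest S (induced E S)"
proof -
  have "simple_graph S (induced E S)"
    using assms finite_subset unfolding forest_def simple_graph_def induced_def by blast
  moreover have "\<not> is_cycle S (induced E S) c" for c
    using assms is_path_induced[OF assms(2)] unfolding forest_def is_cycle_def induced_def by blast
  ultimately show ?thesis by (simp add: forest_def)
qed

lemma degree_induced: "v \<in> S \<Longrightarrow> degree S (induced E S) v = card {u \<in> S. E v u}"
  unfolding degree_def induced_def by (rule arg_cong[where f = card]) auto

lemma degree_induced_eq:
  assumes "v \<in> S" "S \<subseteq> V" "\<And>u. u \<in> V \<Longrightarrow> E v u \<Longrightarrow> u \<in> S"
  shows "degree S (induced E S) v = degree V E v"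
proof -
  have "degree S (induced E S) v = card {u \<in> S. E v u}" by (rule degree_induced[OF assms(1)])
  also have "{u \<in> S. E v u} = {u \<in> V. E v u}" using assms(2,3) by auto
  finally show ?thesis by (simp add: degree_def)
qed

lemma length_path_le_card: "finite V \<Longrightarrow> is_path V E p \<Longrightarrow> length p \<le> card V"
  unfolding is_path_def by (metis card_mono distinct_card)

lemma longest_path_exists:
  assumes "finite V" "V \<noteq> {}"
  obtains p where "is_path V E p" "\<And>q. is_path V E q \<Longrightarrow> length q \<le> length p"
proof -
  obtain v where "v \<in> V" using assms(2) by blast
  then have "is_path V E [v]" by (simp add: is_path_def)
  then show ?thesis
    using that ex_has_greatest_nat[of "is_path V E" "[v]" length "Suc (card V)"]
      length_path_le_card[OF assms(1)] by (meson le_imp_less_Suc)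
qed

lemma is_path_snoc:
  assumes "is_path V E p" "u \<in> V" "u \<notin> set p" "E (last p) u"
  shows "is_path V E (p @ [u])"
  unfolding is_path_def
proof (intro conjI allI impI)
  show "p @ [u] \<noteq> []" "set (p @ [u]) \<subseteq> V" "distinct (p @ [u])"
    using assms by (auto simp: is_path_def)
  fix i assume i: "Suc i < length (p @ [u])"
  show "E ((p @ [u]) ! i) ((p @ [u]) ! Suc i)"
  proof (cases "Suc i < length p")
    case True
    then show ?thesis using assms(1) by (simp add: is_path_def nth_append)
  next
    case False
    then have "i = length p - 1" "p \<noteq> []" using i assms(1) by (auto simp: is_path_def)
    then show ?thesis using assms(4) False by (simp add: nth_append last_conv_nth)
  qed
qed

lemma is_path_Cons:
  assumes "is_path V E p" "u \<in> V" "u \<notin> set p" "E u (hd p)"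
  shows "is_path V E (u # p)"
  unfolding is_path_def
proof (intro conjI allI impI)
  show "u # p \<noteq> []" "set (u # p) \<subseteq> V" "distinct (u # p)"
    using assms by (auto simp: is_path_def)
  fix i assume i: "Suc i < length (u # p)"
  show "E ((u # p) ! i) ((u # p) ! Suc i)"
  proof (cases i)
    case 0
    have "p \<noteq> []" using assms(1) by (simp add: is_path_def)
    then show ?thesis using assms(4) 0 by (simp add: hd_conv_nth)
  next
    case (Suc j)
    then show ?thesis using assms(1) i by (simp add: is_path_def)
  qed
qed

lemma is_path_drop: "is_path V E p \<Longrightarrow> j < length p \<Longrightarrow> is_path V E (drop j p)"
  unfolding is_path_def by (auto dest: in_set_dropD)

lemma is_path_take: "is_path V E p \<Longrightarrow> 0 < j \<Longrightarrow> is_path V E (take j p)"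
  unfolding is_path_def by (auto dest: in_set_takeD)

lemma longest_path_last_closed:
  assumes "is_path V E p" "\<And>q. is_path V E q \<Longrightarrow> length q \<le> length p"
    and "simple_graph V E" "E (last p) u"
  shows "u \<in> set p"
proof (rule ccontr)
  assume "u \<notin> set p"
  then have "is_path V E (p @ [u])"
    using assms(1,4) simple_graphD(5)[OF assms(3,4)] by (intro is_path_snoc)
  then show False using assms(2) by fastforce
qed

lemma longest_path_hd_closed:
  assumes "is_path V E p" "\<And>q. is_path V E q \<Longrightarrow> length q \<le> length p"
    and "simple_graph V E" "E (hd p) u"
  shows "u \<in> set p"
proof (rule ccontr)
  assume "u \<notin> set p"
  then have "is_path V E (u # p)"
    using assms(1) simple_graphD(2,5)[OF assms(3) assms(4)] by (intro is_path_Cons)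
  then show False using assms(2) by fastforce
qed

text \<open>The last vertex of a longest path in a forest is adjacent only to its predecessor: any other
  neighbour lies on the path and would close a cycle.\<close>
lemma forest_has_leaf:
  assumes "forest V E" "V \<noteq> {}"
  obtains x where "x \<in> V" "degree V E x \<le> 1"
proof -
  have sg: "simple_graph V E" and acyclic: "\<And>c. \<not> is_cycle V E c"
    using assms(1) by (auto simp: forest_def)
  obtain p where p: "is_path V E p" and longest: "\<And>q. is_path V E q \<Longrightarrow> length q \<le> length p"
    using longest_path_exists[OF simple_graphD(1)[OF sg] assms(2)] by blast
  define m where "m = length p"
  have "p \<noteq> []" using p by (simp add: is_path_def)
  then have last_p: "last p = p ! (m - 1)" by (simp add: m_def last_conv_nth)
  have "{u \<in> V. E (last p) u} \<subseteq> {p ! (m - 2)}"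
  proof
    fix u assume "u \<in> {u \<in> V. E (last p) u}"
    then have e: "E (last p) u" by simp
    obtain j where j: "j < m" "u = p ! j"
      using longest_path_last_closed[OF p longest sg e] by (metis in_set_conv_nth m_def)
    have "j \<noteq> m - 1" using e j last_p simple_graphD(3)[OF sg] by auto
    moreover have "j = m - 2"
    proof (rule ccontr)
      assume "j \<noteq> m - 2"
      with \<open>j \<noteq> m - 1\<close> j have "3 \<le> length (drop j p)" by (simp add: m_def)
      moreover have "last (drop j p) = last p" "hd (drop j p) = u"
        using j by (simp_all add: m_def hd_drop_conv_nth)
      ultimately have "is_cycle V E (drop j p)"
        using is_path_drop[OF p] j e by (simp add: is_cycle_def m_def)
      with acyclic show False by blast
    qed
    then show "u \<in> {p ! (m - 2)}" using j by simp
  qed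
  then have "degree V E (last p) \<le> 1"
    unfolding degree_def by (metis card.insert card.empty card_mono finite.intros One_nat_def empty_iff)
  moreover have "last p \<in> V" using p \<open>p \<noteq> []\<close> by (auto simp: is_path_def)
  ultimately show ?thesis using that by blast
qed

lemma forest_degree_sum:
  assumes "forest V E" "V \<noteq> {}"
  shows "(\<Sum>v\<in>V. degree V E v) + 2 \<le> 2 * card V"
  using assms
proof (induction "card V" arbitrary: V E rule: less_induct)
  case less
  have sg: "simple_graph V E" using less.prems by (simp add: forest_def)
  note fin = simple_graphD(1)[OF sg]
  obtain x where x: "x \<in> V" "degree V E x \<le> 1" using forest_has_leaf less.prems by blast
  show ?case
  proof (cases "V = {x}")
    case True
    then show ?thesis using simple_graphD(3)[OF sg] by (simp add: degree_def)
  next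
    case False
    define R where "R = V - {x}"
    have "R \<noteq> {}" "R \<subseteq> V" "finite R" using False x fin by (auto simp: R_def)
    have card_V: "card V = Suc (card R)" using card_Suc_Diff1[OF fin x(1)] by (simp add: R_def)
    have IH: "(\<Sum>v\<in>R. degree R (induced E R) v) + 2 \<le> 2 * card R"
      using less.hyps[of R "induced E R"] card_V forest_induced[OF less.prems(1) \<open>R \<subseteq> V\<close>] \<open>R \<noteq> {}\<close>
      by simp
    have deg_R: "degree V E v = degree R (induced E R) v + (if E v x then 1 else 0)" if "v \<in> R" for v
    proof -
      have "{u \<in> V - R. E v u} = (if E v x then {x} else {})" using x(1) by (auto simp: R_def)
      then show ?thesis using degree_split[OF fin \<open>R \<subseteq> V\<close>, of E v] degree_induced[OF that] by simp
    qed
    have "(\<Sum>v\<in>R. if E v x then 1 else 0 :: nat) = card {v \<in> R. E v x}"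
      using \<open>finite R\<close> by (simp add: sum.If_cases Int_def)
    also have "{v \<in> R. E v x} = {v \<in> V. E x v}"
      using simple_graphD(2,3)[OF sg] by (auto simp: R_def)
    finally have "(\<Sum>v\<in>R. if E v x then 1 else 0 :: nat) = degree V E x" by (simp add: degree_def)
    moreover have "(\<Sum>v\<in>V. degree V E v) = degree V E x + (\<Sum>v\<in>R. degree V E v)"
      using x fin by (simp add: R_def sum.remove)
    ultimately have "(\<Sum>v\<in>V. degree V E v) = degree V E x + degree V E x + (\<Sum>v\<in>R. degree R (induced E R) v)"
      using deg_R by (simp add: sum.distrib)
    then show ?thesis using IH x(2) card_V by linarith
  qed
qed

lemma longest_path_closed:
  assumes sg: "simple_graph V E" and deg: "\<forall>v\<in>V. degree V E v \<le> 2"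
    and p: "is_path V E p" and longest: "\<And>q. is_path V E q \<Longrightarrow> length q \<le> length p"
    and v: "v \<in> set p" and e: "E v u"
  shows "u \<in> set p"
proof (rule ccontr)
  assume u: "u \<notin> set p"
  have "p \<noteq> []" and "distinct p" and adj: "\<And>i. Suc i < length p \<Longrightarrow> E (p ! i) (p ! Suc i)"
    using p by (auto simp: is_path_def)
  obtain i where i: "i < length p" "v = p ! i" using v by (metis in_set_conv_nth)
  consider "i = length p - 1" | "i = 0" | "0 < i" "i < length p - 1" using i by linarith
  then show False
  proof cases
    case 1
    then have "last p = v" using i \<open>p \<noteq> []\<close> by (simp add: last_conv_nth)
    then show False using longest_path_last_closed[OF p longest sg] e u by simp
  next
    case 2
    then have "hd p = v" using i \<open>p \<noteq> []\<close> by (simp add: hd_conv_nth)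
    then show False using longest_path_hd_closed[OF p longest sg] e u by simp
  next
    case 3
    define w where "w = p ! (i - 1)"
    define w' where "w' = p ! Suc i"
    have "E v w" using adj[of "i - 1"] simple_graphD(2)[OF sg] i 3 by (simp add: w_def)
    moreover have "E v w'" using adj[of i] i 3 by (simp add: w'_def)
    moreover have "w \<noteq> w'" using \<open>distinct p\<close> i 3 by (simp add: w_def w'_def nth_eq_iff_index_eq)
    moreover have "u \<noteq> w" "u \<noteq> w'" using u i 3 by (auto simp: w_def w'_def)
    ultimately have "card {w, w', u} \<le> degree V E v"
      using e simple_graphD(1,5)[OF sg] by (intro card_le_degree) auto
    moreover have "card {w, w', u} = 3" using \<open>w \<noteq> w'\<close> \<open>u \<noteq> w\<close> \<open>u \<noteq> w'\<close> by simp
    moreover have "v \<in> V" using p v by (auto simp: is_path_def)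
    ultimately show False using deg by fastforce
  qed
qed

lemma forest_degree_sum_card_le:
  assumes "forest V E" "V \<noteq> {}" "card V \<le> K"
  shows "2 * card V + K * (\<Sum>v\<in>V. degree V E v) \<le> 2 * K * card V"
proof -
  have "K * ((\<Sum>v\<in>V. degree V E v) + 2) \<le> K * (2 * card V)"
    using forest_degree_sum[OF assms(1,2)] by (rule mult_le_mono2)
  then show ?thesis using assms(3) by (simp add: algebra_simps)
qed

text \<open>A forest of maximum degree 2 is a disjoint union of paths; if each has at most K vertices,
  there are at least |V| / K of them, i.e. |V| minus the number of edges is at least |V| / K.\<close>
lemma forest_short_paths_degree_sum:
  assumes "forest V E" "\<forall>v\<in>V. degree V E v \<le> 2" "\<And>p. is_path V E p \<Longrightarrow> length p \<le> K"
  shows "2 * card V + K * (\<Sum>v\<in>V. degree V E v) \<le> 2 * K * card V"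
  using assms
proof (induction "card V" arbitrary: V E rule: less_induct)
  case less
  have sg: "simple_graph V E" using less.prems(1) by (simp add: forest_def)
  note fin = simple_graphD(1)[OF sg]
  show ?case
  proof (cases "V = {}")
    case True
    then show ?thesis by simp
  next
    case False
    obtain p where p: "is_path V E p" and longest: "\<And>q. is_path V E q \<Longrightarrow> length q \<le> length p"
      using longest_path_exists[OF fin False] by blast
    define S where "S = set p"
    define R where "R = V - S"
    have closed: "\<And>v u. v \<in> S \<Longrightarrow> E v u \<Longrightarrow> u \<in> S"
      using longest_path_closed[OF sg less.prems(2) p longest] by (simp add: S_def)
    have "S \<subseteq> V" "S \<noteq> {}" using p by (auto simp: S_def is_path_def)
    have "card S \<le> K" using less.prems(3)[OF p] p by (simp add: S_def is_path_def distinct_card)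
    have "2 * card S + K * (\<Sum>v\<in>S. degree S (induced E S) v) \<le> 2 * K * card S"
      using forest_degree_sum_card_le forest_induced[OF less.prems(1) \<open>S \<subseteq> V\<close>] \<open>S \<noteq> {}\<close>
        \<open>card S \<le> K\<close> by blast
    moreover have "degree S (induced E S) v = degree V E v" if "v \<in> S" for v
      using degree_induced_eq[OF that \<open>S \<subseteq> V\<close>] closed that by blast
    ultimately have sum_S: "2 * card S + K * (\<Sum>v\<in>S. degree V E v) \<le> 2 * K * card S" by simp
    have deg_R: "degree R (induced E R) v = degree V E v" if "v \<in> R" for v
      by (rule degree_induced_eq[OF that]) (use closed simple_graphD(2)[OF sg] that in \<open>auto simp: R_def\<close>)
    have card_V: "card V = card S + card R"
      using fin \<open>S \<subseteq> V\<close> by (simp add: R_def card_Diff_subset card_mono finite_subset)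
    have "card R < card V" using card_V \<open>S \<noteq> {}\<close> \<open>S \<subseteq> V\<close> fin
      by (simp add: card_gt_0_iff finite_subset)
    moreover have "forest R (induced E R)" using forest_induced[OF less.prems(1)] by (simp add: R_def)
    moreover have "\<forall>v\<in>R. degree R (induced E R) v \<le> 2" using deg_R less.prems(2) by (simp add: R_def)
    moreover have "length q \<le> K" if "is_path R (induced E R) q" for q
      using less.prems(3) is_path_induced[OF _ that] by (simp add: R_def)
    ultimately have "2 * card R + K * (\<Sum>v\<in>R. degree R (induced E R) v) \<le> 2 * K * card R"
      using less.hyps by blast
    then have sum_R: "2 * card R + K * (\<Sum>v\<in>R. degree V E v) \<le> 2 * K * card R"
      using deg_R by simp
    have "(\<Sum>v\<in>V. degree V E v) = (\<Sum>v\<in>S. degree V E v) + (\<Sum>v\<in>R. degree V E v)"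
      using fin \<open>S \<subseteq> V\<close> by (simp add: R_def sum.subset_diff)
    then show ?thesis using sum_S sum_R card_V by (simp add: algebra_simps)
  qed
qed

lemma forest_degree_sum_non_isolated:
  assumes "forest V E" "E a b"
  shows "(\<Sum>v\<in>V. degree V E v) + 2 \<le> 2 * card {v \<in> V. degree V E v \<noteq> 0}"
proof -
  define N where "N = {v \<in> V. degree V E v \<noteq> 0}"
  have sg: "simple_graph V E" using assms(1) by (simp add: forest_def)
  have "N \<subseteq> V" by (simp add: N_def)
  have "a \<in> N" using degree_pos[OF sg assms(2)] simple_graphD(4)[OF sg assms(2)] by (simp add: N_def)
  have deg_N: "degree N (induced E N) v = degree V E v" if "v \<in> N" for v
    by (rule degree_induced_eq[OF that \<open>N \<subseteq> V\<close>])
      (use degree_pos[OF sg] simple_graphD(2)[OF sg] in \<open>auto simp: N_def\<close>)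
  have "(\<Sum>v\<in>V. degree V E v) = (\<Sum>v\<in>N. degree V E v)"
    using simple_graphD(1)[OF sg] by (intro sum.mono_neutral_right) (auto simp: N_def)
  also have "\<dots> = (\<Sum>v\<in>N. degree N (induced E N) v)" using deg_N by simp
  finally show ?thesis
    using forest_degree_sum[OF forest_induced[OF assms(1) \<open>N \<subseteq> V\<close>]] \<open>a \<in> N\<close>
    by (auto simp: N_def)
qed

lemma sum_card_swap:
  assumes "finite A" "finite B"
  shows "(\<Sum>a\<in>A. card {b \<in> B. R a b}) = (\<Sum>b\<in>B. card {a \<in> A. R a b})"
proof -
  have "(\<Sum>a\<in>A. card {b \<in> B. R a b}) = (\<Sum>a\<in>A. \<Sum>b\<in>B. if R a b then 1 else 0)"
    using assms(2) by (simp add: sum.If_cases Int_def)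
  also have "\<dots> = (\<Sum>b\<in>B. \<Sum>a\<in>A. if R a b then 1 else 0)" by (rule sum.swap)
  also have "\<dots> = (\<Sum>b\<in>B. card {a \<in> A. R a b})"
    using assms(1) by (simp add: sum.If_cases Int_def)
  finally show ?thesis .
qed

lemma branching_kpvc_uncovered_degree:
  assumes "branching_kpvc V E k P" "v \<in> V" "v \<notin> P" "degree V E v < 3"
  shows "degree V E v = 2"
  using assms unfolding branching_kpvc_def by fastforce

text \<open>Each path component of the degree-2 vertices outside P has at most K vertices
  and sends exactly two edges to the rest of the forest.\<close>
lemma branching_kpvc_uncovered_bound:
  assumes f: "forest V E" and cover: "branching_kpvc V E (Suc K) P"
  defines "U \<equiv> {v \<in> V - P. degree V E v < 3}"
  shows "2 * card U \<le> K * (\<Sum>w\<in>V - U. degree V E w)"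
proof -
  have sg: "simple_graph V E" using f by (simp add: forest_def)
  note fin = simple_graphD(1)[OF sg]
  have "U \<subseteq> V" by (auto simp: U_def)
  have deg_U: "degree V E u = 2" if "u \<in> U" for u
    using branching_kpvc_uncovered_degree[OF cover] that by (simp add: U_def)
  have "degree U (induced E U) u \<le> 2" if "u \<in> U" for u
    using degree_induced[OF that] card_le_degree[OF fin, of "{w \<in> U. E u w}" E u] deg_U[OF that]
      \<open>U \<subseteq> V\<close> by fastforce
  moreover have "length p \<le> K" if p: "is_path U (induced E U) p" for p
  proof (rule ccontr)
    assume "\<not> length p \<le> K"
    then have "is_path V E (take (Suc K) p)" "length (take (Suc K) p) = Suc K"
      using is_path_take[OF is_path_induced[OF \<open>U \<subseteq> V\<close> p]] by auto
    then obtain v where "v \<in> set (take (Suc K) p)" "3 \<le> degree V E v \<or> v \<in> P"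
      using cover unfolding branching_kpvc_def by blast
    moreover have "set p \<subseteq> U" using p by (simp add: is_path_def)
    ultimately show False by (auto simp: U_def dest: in_set_takeD)
  qed
  ultimately have short: "2 * card U + K * (\<Sum>u\<in>U. degree U (induced E U) u) \<le> 2 * K * card U"
    using forest_short_paths_degree_sum[OF forest_induced[OF f \<open>U \<subseteq> V\<close>]] by blast
  define X where "X = (\<Sum>u\<in>U. card {w \<in> V - U. E u w})"
  have "(\<Sum>u\<in>U. degree U (induced E U) u) + X = (\<Sum>u\<in>U. degree V E u)"
    using degree_split[OF fin \<open>U \<subseteq> V\<close>] by (simp add: X_def degree_induced sum.distrib cong: sum.cong)
  also have "\<dots> = 2 * card U" using deg_U by simp
  finally have "2 * card U + K * (\<Sum>u\<in>U. degree U (induced E U) u)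
      \<le> K * ((\<Sum>u\<in>U. degree U (induced E U) u) + X)"
    using short by (simp add: mult.assoc mult.left_commute)
  then have "2 * card U \<le> K * X" by (simp add: add_mult_distrib2)
  also have "X = (\<Sum>w\<in>V - U. card {u \<in> U. E u w})"
    unfolding X_def using fin \<open>U \<subseteq> V\<close> by (intro sum_card_swap) (auto intro: finite_subset)
  also have "\<dots> \<le> (\<Sum>w\<in>V - U. degree V E w)"
    using simple_graphD(2)[OF sg] \<open>U \<subseteq> V\<close> by (intro sum_mono card_le_degree[OF fin]) blast
  finally show ?thesis by simp
qed

lemma branching_kpvc_bound_arith:
  fixes u b p0 p1 D K :: nat
  assumes "2 * u \<le> K * D" "D + 2 \<le> 2 * b + 2 * p1" "p1 + 3 * b \<le> D"
  shows "u + b + p0 + p1 + 3 * Suc K \<le> 2 * Suc K * (p0 + p1) + 1"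
proof -
  have "b + 2 \<le> p1" using assms(2,3) by linarith
  then have "K * (b + 2) \<le> K * p1" by (rule mult_le_mono2)
  moreover have "K * (D + 2) \<le> K * (2 * b + 2 * p1)" using assms(2) by (rule mult_le_mono2)
  ultimately show ?thesis using assms(1) \<open>b + 2 \<le> p1\<close> by (simp add: algebra_simps)
qed

lemma branching_kpvc_card_lower_bound_edge:
  assumes f: "forest V E" and "E a b" and cover: "branching_kpvc V E (Suc K) P"
  shows "card V + 3 * Suc K \<le> 2 * Suc K * card P + 1"
proof -
  have sg: "simple_graph V E" using f by (simp add: forest_def)
  note fin = simple_graphD(1)[OF sg]
  have "P \<subseteq> V" using cover by (simp add: branching_kpvc_def)
  define U where "U = {v \<in> V - P. degree V E v < 3}"
  define B where "B = {v \<in> V - P. 3 \<le> degree V E v}"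
  define P0 where "P0 = {v \<in> P. degree V E v = 0}"
  define P1 where "P1 = {v \<in> P. degree V E v \<noteq> 0}"
  define D where "D = (\<Sum>w\<in>V - U. degree V E w)"
  have deg_U: "degree V E u = 2" if "u \<in> U" for u
    using branching_kpvc_uncovered_degree[OF cover] that by (simp add: U_def)
  have fin_parts: "finite U" "finite B" "finite P0" "finite P1"
    using fin \<open>P \<subseteq> V\<close> by (auto simp: U_def B_def P0_def P1_def intro: finite_subset)
  have disj: "U \<inter> B = {}" "(U \<union> B) \<inter> P0 = {}" "(U \<union> B \<union> P0) \<inter> P1 = {}"
      "B \<inter> P0 = {}" "(B \<union> P0) \<inter> P1 = {}" "P0 \<inter> P1 = {}" "(U \<union> B) \<inter> P1 = {}"
    by (auto simp: U_def B_def P0_def P1_def)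
  have "V = U \<union> B \<union> P0 \<union> P1" "V - U = B \<union> P0 \<union> P1" "P = P0 \<union> P1"
    using \<open>P \<subseteq> V\<close> by (auto simp: U_def B_def P0_def P1_def)
  then have card_V: "card V = card U + card B + card P0 + card P1"
    and card_P: "card P = card P0 + card P1"
    and D_split: "D = (\<Sum>w\<in>B. degree V E w) + (\<Sum>w\<in>P0. degree V E w) + (\<Sum>w\<in>P1. degree V E w)"
    using fin_parts disj by (simp_all add: D_def card_Un_disjoint sum.union_disjoint)
  have "2 * card U \<le> K * D"
    using branching_kpvc_uncovered_bound[OF f cover] by (simp add: U_def D_def)
  moreover have "D + 2 \<le> 2 * card B + 2 * card P1"
  proof -
    have "{v \<in> V. degree V E v \<noteq> 0} = U \<union> B \<union> P1"
      using branching_kpvc_uncovered_degree[OF cover] \<open>P \<subseteq> V\<close>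
      by (auto simp: U_def B_def P1_def) (metis pos2)
    then have "card {v \<in> V. degree V E v \<noteq> 0} = card U + card B + card P1"
      using fin_parts disj by (simp add: card_Un_disjoint)
    moreover have "(\<Sum>v\<in>V. degree V E v) = (\<Sum>u\<in>U. degree V E u) + D"
      using sum.subset_diff[OF _ fin, of U "degree V E"] by (simp add: D_def U_def add.commute)
    ultimately show ?thesis
      using forest_degree_sum_non_isolated[OF f \<open>E a b\<close>] deg_U by simp
  qed
  moreover have "card P1 + 3 * card B \<le> D"
  proof -
    have "card P1 = (\<Sum>w\<in>P1. 1)" by simp
    also have "\<dots> \<le> (\<Sum>w\<in>P1. degree V E w)" by (rule sum_mono) (simp add: P1_def)
    finally have "card P1 \<le> (\<Sum>w\<in>P1. degree V E w)" .
    moreover have "3 * card B = (\<Sum>w\<in>B. 3)" by simp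
    moreover have "\<dots> \<le> (\<Sum>w\<in>B. degree V E w)" by (rule sum_mono) (simp add: B_def)
    ultimately show ?thesis using D_split by linarith
  qed
  ultimately have "card U + card B + card P0 + card P1 + 3 * Suc K \<le> 2 * Suc K * (card P0 + card P1) + 1"
    by (rule branching_kpvc_bound_arith)
  then show ?thesis using card_V card_P by simp
qed

lemma branching_kpvc_card_lower_bound:
  assumes f: "forest V E" and n: "2 \<le> card V" and cover: "branching_kpvc V E (Suc K) P"
  shows "card V + 3 * Suc K \<le> 2 * Suc K * card P + 1"
proof (cases "\<exists>a b. E a b")
  case False
  have "finite V" "P \<subseteq> V" and leaves: "\<And>v. v \<in> V \<Longrightarrow> degree V E v \<le> 1 \<Longrightarrow> v \<in> P"
    using f cover by (auto simp: forest_def simple_graph_def branching_kpvc_def)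
  then have "V \<subseteq> P" using False by (auto simp: degree_def)
  then have "card V \<le> card P" using \<open>P \<subseteq> V\<close> \<open>finite V\<close> by (simp add: card_mono finite_subset)
  moreover have "2 * K \<le> K * card P"
    using n \<open>card V \<le> card P\<close> by (metis mult.commute mult_le_mono2 order.trans)
  moreover have "2 * Suc K * card P + 1 = 2 * card P + 2 * (K * card P) + 1" by simp
  moreover have "card V + 3 * Suc K = card V + 3 * K + 3" by simp
  ultimately show ?thesis using n by linarith
next
  case True
  then show ?thesis using branching_kpvc_card_lower_bound_edge[OF f _ cover] by blast
qed

lemma finite_branching_kpvcs: "finite V \<Longrightarrow> finite {P. branching_kpvc V E k P}"
  by (rule finite_subset[of _ "Pow V"]) (auto simp: branching_kpvc_def)

lemma psi_b_le: "finite V \<Longrightarrow> branching_kpvc V E k P \<Longrightarrow> psi_b V E k \<le> card P"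
  unfolding psi_b_def by (intro Min_le) (auto simp: finite_branching_kpvcs)

lemma psi_b_attained:
  assumes "finite V"
  obtains P where "branching_kpvc V E k P" "card P = psi_b V E k"
proof -
  have "branching_kpvc V E k V"
    unfolding branching_kpvc_def is_path_def by (metis hd_in_set order_refl subsetD)
  then have "psi_b V E k \<in> card ` {P. branching_kpvc V E k P}"
    unfolding psi_b_def using finite_branching_kpvcs[OF assms(1)] by (intro Min_in) auto
  then show ?thesis using that by auto
qed

lemma psi_b_lower_bound:
  assumes "forest V E" "2 \<le> card V" "0 < k"
  shows "card V + 3 * k \<le> 2 * k * psi_b V E k + 1"
proof -
  have "finite V" using assms(2) card.infinite by fastforce
  then obtain P where "branching_kpvc V E k P" "card P = psi_b V E k" by (rule psi_b_attained)
  moreover obtain K where "k = Suc K" using assms(3) gr0_implies_Suc by blast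
  ultimately show ?thesis using branching_kpvc_card_lower_bound[OF assms(1,2)] by metis
qed

lemma cycle_neighbours:
  assumes "is_cycle V E c" "x \<in> set c"
  obtains y z where "y \<in> set c" "z \<in> set c" "y \<noteq> z" "E y x" "E x z"
proof -
  define l where "l = length c"
  have "3 \<le> l" "distinct c" and adj: "\<And>j. Suc j < l \<Longrightarrow> E (c ! j) (c ! Suc j)"
    and closing: "E (c ! (l - 1)) (c ! 0)"
    using assms(1) by (auto simp: is_cycle_def is_path_def l_def last_conv_nth hd_conv_nth)
  obtain i where i: "i < l" "c ! i = x" using assms(2) by (metis in_set_conv_nth l_def)
  define i_pred where "i_pred = (if i = 0 then l - 1 else i - 1)"
  define i_succ where "i_succ = (if i = l - 1 then 0 else Suc i)"
  have "i_pred < l" "i_succ < l" "i_pred \<noteq> i_succ"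
    using i \<open>3 \<le> l\<close> by (auto simp: i_pred_def i_succ_def)
  moreover have "E (c ! i_pred) x"
    using closing adj[of "i - 1"] i by (cases "i = 0") (auto simp: i_pred_def)
  moreover have "E x (c ! i_succ)"
    using closing adj[of i] i by (cases "i = l - 1") (auto simp: i_succ_def)
  ultimately show ?thesis
    using that \<open>distinct c\<close> by (metis l_def nth_eq_iff_index_eq nth_mem)
qed

definition parent_graph :: "'a set \<Rightarrow> ('a \<Rightarrow> 'a) \<Rightarrow> 'a \<Rightarrow> 'a \<Rightarrow> bool" where
  "parent_graph A par u v \<longleftrightarrow> (v \<in> A \<and> u = par v) \<or> (u \<in> A \<and> v = par u)"

text \<open>The largest vertex of a cycle would need two distinct smaller neighbours, but its only
  smaller neighbour is its parent.\<close>
lemma forest_parent_graph: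
  fixes par :: "'a::linorder \<Rightarrow> 'a"
  assumes "finite V" "A \<subseteq> V" "\<And>v. v \<in> A \<Longrightarrow> par v < v \<and> par v \<in> V"
  shows "forest V (parent_graph A par)"
proof -
  have "simple_graph V (parent_graph A par)"
    unfolding simple_graph_def
  proof (intro conjI allI impI)
    fix u v
    show "parent_graph A par u v \<Longrightarrow> parent_graph A par v u" by (auto simp: parent_graph_def)
    show "\<not> parent_graph A par v v" using assms(3)[of v] by (auto simp: parent_graph_def)
    show "u \<in> V" "v \<in> V" if "parent_graph A par u v"
      using that assms(2) assms(3)[of u] assms(3)[of v] by (auto simp: parent_graph_def)
  qed (rule assms(1))
  moreover have "\<not> is_cycle V (parent_graph A par) c" for c
  proof
    assume c: "is_cycle V (parent_graph A par) c"
    then have "c \<noteq> []" by (simp add: is_cycle_def is_path_def)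
    define x where "x = Max (set c)"
    have "x \<in> set c" using \<open>c \<noteq> []\<close> by (simp add: x_def)
    have to_parent: "y = par x" if y: "y \<in> set c" and xy: "parent_graph A par x y" for y
    proof -
      have "y \<le> x" using y by (simp add: x_def)
      moreover have "x < y" if "y \<in> A" "x = par y" using assms(3)[OF that(1)] that(2) by simp
      ultimately show ?thesis using xy by (auto simp: parent_graph_def)
    qed
    obtain y z where yz: "y \<in> set c" "z \<in> set c" "y \<noteq> z"
      "parent_graph A par y x" "parent_graph A par x z"
      using cycle_neighbours[OF c \<open>x \<in> set c\<close>] by blast
    have "parent_graph A par x y" using yz(4) by (auto simp: parent_graph_def)
    then have "y = par x" using to_parent yz(1) by blast
    moreover have "z = par x" using to_parent yz(2,5) by blast
    ultimately show False using yz(3) by simp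
  qed
  ultimately show ?thesis by (simp add: forest_def)
qed

text \<open>The comb: the spine 0 - 1 - ... - (M+1)k together with, for c = 1..M, the tooth
  (c+M)k+1 - ... - (c+M+1)k hanging off the spine vertex ck. Its leaves are 0, (M+1)k, ...,
  (2M+1)k.\<close>
definition comb_parent :: "nat \<Rightarrow> nat \<Rightarrow> nat \<Rightarrow> nat" where
  "comb_parent k M v = (if k dvd (v - 1) \<and> (M + 1) * k \<le> v - 1 then v - 1 - M * k else v - 1)"

definition comb_edge :: "nat \<Rightarrow> nat \<Rightarrow> nat \<Rightarrow> nat \<Rightarrow> bool" where
  "comb_edge k M = parent_graph {1..(2 * M + 1) * k} (comb_parent k M)"

definition comb_leaves :: "nat \<Rightarrow> nat \<Rightarrow> nat set" where
  "comb_leaves k M = (\<lambda>c. c * k) ` ({0} \<union> {M + 1..2 * M + 1})"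

lemma comb_parent_less: "0 < v \<Longrightarrow> comb_parent k M v < v"
  by (simp add: comb_parent_def)

lemma forest_comb: "forest {0..(2 * M + 1) * k} (comb_edge k M)"
  unfolding comb_edge_def
proof (rule forest_parent_graph)
  fix v assume "v \<in> {1..(2 * M + 1) * k}"
  then show "comb_parent k M v < v \<and> comb_parent k M v \<in> {0..(2 * M + 1) * k}"
    using comb_parent_less[of v k M] by simp
qed auto

lemma comb_edge_iff:
  "comb_edge k M u v \<longleftrightarrow>
     (v \<in> {1..(2 * M + 1) * k} \<and> u = comb_parent k M v) \<or> (u \<in> {1..(2 * M + 1) * k} \<and> v = comb_parent k M u)"
  by (simp add: comb_edge_def parent_graph_def)

lemma card_comb_leaves: "0 < k \<Longrightarrow> card (comb_leaves k M) = M + 2"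
  unfolding comb_leaves_def by (subst card_image) (auto simp: inj_on_def)

lemma comb_degree_non_multiple:
  assumes "v \<le> (2 * M + 1) * k" "\<not> k dvd v"
  shows "2 \<le> degree {0..(2 * M + 1) * k} (comb_edge k M) v"
proof -
  have "0 < v" using assms(2) by (cases v) auto
  have "v \<noteq> (2 * M + 1) * k" using assms(2) by auto
  have "comb_parent k M v < v" using \<open>0 < v\<close> by (rule comb_parent_less)
  have "comb_parent k M (v + 1) = v" using assms(2) by (simp add: comb_parent_def)
  then have "card {comb_parent k M v, v + 1} \<le> degree {0..(2 * M + 1) * k} (comb_edge k M) v"
    using assms(1) \<open>0 < v\<close> \<open>v \<noteq> (2 * M + 1) * k\<close> \<open>comb_parent k M v < v\<close>
    by (intro card_le_degree) (auto simp: comb_edge_iff)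
  moreover have "card {comb_parent k M v, v + 1} = 2" using \<open>comb_parent k M v < v\<close> by simp
  ultimately show ?thesis by simp
qed

lemma comb_parent_spine_multiple:
  assumes "2 \<le> k" "1 \<le> c" "c \<le> M"
  shows "comb_parent k M (c * k) = c * k - 1"
    and "comb_parent k M (c * k + 1) = c * k"
    and "comb_parent k M ((c + M) * k + 1) = c * k"
proof -
  have "k \<le> c * k" using assms(2) by simp
  show "comb_parent k M (c * k) = c * k - 1"
  proof -
    have "\<not> k dvd (c * k - 1)"
    proof
      assume "k dvd (c * k - 1)"
      then have "k dvd (c * k - (c * k - 1))" by (simp add: dvd_diff_nat)
      then show False using assms(1) \<open>k \<le> c * k\<close> by simp
    qed
    then show ?thesis by (simp add: comb_parent_def)
  qed
  have "c * k < (M + 1) * k" using assms by (intro mult_strict_right_mono) auto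
  then show "comb_parent k M (c * k + 1) = c * k" by (simp add: comb_parent_def)
  show "comb_parent k M ((c + M) * k + 1) = c * k"
    using assms(2) by (simp add: comb_parent_def algebra_simps)
qed

lemma comb_degree_spine_multiple:
  assumes "2 \<le> k" "1 \<le> c" "c \<le> M"
  shows "3 \<le> degree {0..(2 * M + 1) * k} (comb_edge k M) (c * k)"
proof -
  have "k \<le> c * k" "c * k < (c + M) * k" using assms by simp_all
  have "(c + M) * k + 1 \<le> (2 * M + 1) * k"
  proof -
    have "c * k \<le> M * k" using assms(3) by simp
    moreover have "(c + M) * k = c * k + M * k" "(2 * M + 1) * k = M * k + M * k + k"
      by (simp_all add: algebra_simps)
    ultimately show ?thesis using assms(1) by linarith
  qed
  then have "c * k + 1 \<le> (2 * M + 1) * k" using \<open>c * k < (c + M) * k\<close> by linarith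
  have "card {c * k - 1, c * k + 1, (c + M) * k + 1}
      \<le> degree {0..(2 * M + 1) * k} (comb_edge k M) (c * k)"
    using comb_parent_spine_multiple[OF assms] \<open>k \<le> c * k\<close> \<open>c * k + 1 \<le> (2 * M + 1) * k\<close>
      \<open>(c + M) * k + 1 \<le> (2 * M + 1) * k\<close> assms(1)
    by (intro card_le_degree) (auto simp: comb_edge_iff)
  moreover have "c * k - 1 \<noteq> c * k + 1" "c * k - 1 \<noteq> (c + M) * k + 1" "c * k + 1 \<noteq> (c + M) * k + 1"
    using \<open>k \<le> c * k\<close> \<open>c * k < (c + M) * k\<close> assms(1) by linarith+
  ultimately show ?thesis by simp
qed

lemma comb_edge_same_block:
  assumes "comb_edge k M u v" "\<not> k dvd u" "\<not> k dvd v"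
  shows "u div k = v div k"
proof -
  have parent: "comb_parent k M x = x - 1" if "\<not> k dvd comb_parent k M x" for x
    using that dvd_diff_nat[of k "x - 1" "M * k"] by (auto simp: comb_parent_def split: if_splits)
  have "v = Suc u \<or> u = Suc v"
    using assms parent[of u] parent[of v] by (auto simp: comb_edge_iff)
  then show ?thesis using assms(2,3) by (auto simp: div_Suc dvd_eq_mod_eq_0)
qed

text \<open>A path avoiding the multiples of k stays inside one block ck+1, ..., ck+k-1.\<close>
lemma comb_path_short:
  assumes "0 < k" and p: "is_path {0..(2 * M + 1) * k} (comb_edge k M) p"
    and "\<forall>v\<in>set p. \<not> k dvd v"
  shows "length p < k"
proof -
  have "distinct p" and adj: "\<And>i. Suc i < length p \<Longrightarrow> comb_edge k M (p ! i) (p ! Suc i)"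
    using p by (auto simp: is_path_def)
  have same_block: "p ! i div k = p ! 0 div k" if "i < length p" for i
    using that
  proof (induction i)
    case (Suc i)
    then show ?case using comb_edge_same_block[OF adj] assms(3) by (simp add: nth_mem)
  qed simp
  have "inj_on (\<lambda>v. v mod k) (set p)"
    using same_block by (auto simp: inj_on_def in_set_conv_nth) (metis div_mult_mod_eq)
  moreover have "(\<lambda>v. v mod k) ` set p \<subseteq> {1..<k}"
    using assms(1,3) by (auto simp: dvd_eq_mod_eq_0 Suc_le_eq)
  ultimately have "card (set p) \<le> card {1..<k}" by (rule card_inj_on_le) simp
  then show ?thesis using \<open>distinct p\<close> assms(1) by (simp add: distinct_card)
qed

lemma comb_branching_kpvc:
  assumes "2 \<le> k"
  shows "branching_kpvc {0..(2 * M + 1) * k} (comb_edge k M) k (comb_leaves k M)"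
proof -
  define V where "V = {0..(2 * M + 1) * k}"
  have multiple: "v \<in> comb_leaves k M \<or> 3 \<le> degree V (comb_edge k M) v"
    if v: "v \<in> V" and dvd: "k dvd v" for v
  proof -
    obtain c where "v = c * k" using dvd by (metis dvdE mult.commute)
    moreover have "c * k \<le> (2 * M + 1) * k" using v \<open>v = c * k\<close> by (simp add: V_def)
    ultimately have "c \<le> 2 * M + 1" using assms by (metis mult_le_cancel2 not_numeral_le_zero not_gr_zero)
    then show ?thesis
      using comb_degree_spine_multiple[OF assms, of c M] \<open>v = c * k\<close>
      by (cases "1 \<le> c \<and> c \<le> M") (auto simp: V_def comb_leaves_def)
  qed
  have "comb_leaves k M \<subseteq> V"
    unfolding comb_leaves_def
  proof (rule image_subsetI)
    fix c assume "c \<in> {0} \<union> {M + 1..2 * M + 1}"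
    then have "c * k \<le> (2 * M + 1) * k" by (intro mult_le_mono1) auto
    then show "c * k \<in> V" by (simp add: V_def)
  qed
  moreover have "v \<in> comb_leaves k M" if "v \<in> V" "degree V (comb_edge k M) v \<le> 1" for v
    using multiple[OF that(1)] comb_degree_non_multiple[of v M k] that by (force simp: V_def)
  moreover have "\<exists>v\<in>set p. 3 \<le> degree V (comb_edge k M) v \<or> v \<in> comb_leaves k M"
    if "is_path V (comb_edge k M) p" "length p = k" for p
    using comb_path_short[of k M p] multiple that assms by (force simp: V_def is_path_def)
  ultimately show ?thesis by (simp add: branching_kpvc_def V_def)
qed

lemma psi_b_comb:
  assumes "2 \<le> k"
  shows "psi_b {0..(2 * M + 1) * k} (comb_edge k M) k = M + 2"
proof (rule antisym)
  show "psi_b {0..(2 * M + 1) * k} (comb_edge k M) k \<le> M + 2"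
    using psi_b_le[OF _ comb_branching_kpvc[OF assms]] card_comb_leaves assms by simp
  have "card {0..(2 * M + 1) * k} + 3 * k \<le> 2 * k * psi_b {0..(2 * M + 1) * k} (comb_edge k M) k + 1"
    by (rule psi_b_lower_bound[OF forest_comb]) (use assms in simp_all)
  then have "2 * k * (M + 2) \<le> 2 * k * psi_b {0..(2 * M + 1) * k} (comb_edge k M) k"
    by (simp add: algebra_simps)
  moreover have "0 < 2 * k" using assms by simp
  ultimately show "M + 2 \<le> psi_b {0..(2 * M + 1) * k} (comb_edge k M) k"
    by (metis mult_le_cancel1)
qed

lemma comb_size_from_dvd:
  fixes n k :: nat
  assumes "2 \<le> n" "2 \<le> k" "2 * k dvd n + 3 * k - 1"
  obtains M where "n = (2 * M + 1) * k + 1" "(n + 3 * k - 1) div (2 * k) = M + 2"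
proof -
  obtain m where m: "n + 3 * k - 1 = 2 * k * m" using assms(3) by blast
  have "2 \<le> m"
  proof (rule ccontr)
    assume "\<not> 2 \<le> m"
    then have "2 * k * m \<le> 2 * k" by simp
    with m assms(1) show False by linarith
  qed
  then obtain M where "m = M + 2" by (metis add.commute le_Suc_ex)
  then have "2 * k * m = 2 * (M * k) + 4 * k" "(2 * M + 1) * k = 2 * (M * k) + k"
    by (simp_all add: algebra_simps)
  then have "n = (2 * M + 1) * k + 1" using m assms(1,2) by linarith
  moreover have "(n + 3 * k - 1) div (2 * k) = M + 2" using m \<open>m = M + 2\<close> assms(2) by simp
  ultimately show ?thesis by (rule that)
qed

theorem theorem2:
  shows "(\<forall>(V :: 'a set) E n k. forest V E \<and> card V = n \<and> n \<ge> 2 \<and> k \<ge> 2 \<longrightarrow>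
            real (psi_b V E k) \<ge> (real n + 3 * real k - 1) / (2 * real k))
       \<and> (\<forall>n k. n \<ge> 2 \<and> k \<ge> 2 \<and> (2 * k) dvd (n + 3 * k - 1) \<longrightarrow>
            (\<exists>(V :: nat set) E. forest V E \<and> card V = n \<and>
               psi_b V E k = (n + 3 * k - 1) div (2 * k)))"
proof (intro conjI allI impI)
  fix V :: "'a set" and E and n k :: nat
  assume a: "forest V E \<and> card V = n \<and> n \<ge> 2 \<and> k \<ge> 2"
  then have "real (n + 3 * k) \<le> real (2 * k * psi_b V E k + 1)"
    using psi_b_lower_bound[of V E k] by (simp only: of_nat_le_iff) simp
  then show "(real n + 3 * real k - 1) / (2 * real k) \<le> real (psi_b V E k)"
    using a by (simp add: pos_divide_le_eq algebra_simps)
next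
  fix n k :: nat
  assume a: "n \<ge> 2 \<and> k \<ge> 2 \<and> (2 * k) dvd (n + 3 * k - 1)"
  then obtain M where "n = (2 * M + 1) * k + 1" "(n + 3 * k - 1) div (2 * k) = M + 2"
    using comb_size_from_dvd by blast
  then show "\<exists>(V :: nat set) E. forest V E \<and> card V = n \<and> psi_b V E k = (n + 3 * k - 1) div (2 * k)"
    using forest_comb[of M k] psi_b_comb[of k M] a
    by (intro exI[of _ "{0..(2 * M + 1) * k}"] exI[of _ "comb_edge k M"]) simp
qed

end
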